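(* Let $S\subset\mathbb{R}^n_+$ be compact and convex with $0\in S$. Then for every $z\in\mathbb{C}^{*n}$ and $w\in\mathbb{C}^n$, $$H_S(z+w)\le H_S(z)+\varphi_S\big(|w_1|/|z_1|,\dots,|w_n|/|z_n|\big),$$ and in particular, for every $w\in\overline{\mathbb{D}}^n$ and $\delta\in\,]0,1[$, $H_S(\mathbf{1}+\delta w)\le\delta\sigma_S$. Furthermore, for every $z\in\mathbb{C}^{*n}$ and $w\in\mathbb{C}^n$, $$H_S(z+w)\le H_S(z)+\varphi_S\big(\log^+(|w_1|/|z_1|),\dots,\log^+(|w_n|/|z_n|)\big)+(\log2)\,\sigma_S.$$
   Context: $\mathbb{R}_+=[0,\infty)$, $\mathbb{C}^*=\mathbb{C}\setminus\{0\}$, $\mathbb{C}^{*n}=(\mathbb{C}^* )^n$, $\mathbb{D}$ is the open unit disc in $\mathbb{C}$, $\mathbf{1}=(1,\dots,1)$. For compact $S\subset\mathbb{R}^n_+$, $\varphi_S(\xi)=\max_{s\in S}\langle s,\xi\rangle$ for $\xi\in\mathbb{R}^n$ (supporting function), and $\sigma_S=\varphi_S(\mathbf{1})$. The logarithmic supporting function $H_S\colon\mathbb{C}^n\to\mathbb{R}_+$ is $H_S(z)=\varphi_S(\log|z_1|,\dots,\log|z_n|)$ for $z\in\mathbb{C}^{*n}$, and $H_S(z)=\limsup_{\mathbb{C}^{*n}\ni w\to z}H_S(w)$ for $z\in\mathbb{C}^n\setminus\mathbb{C}^{*n}$. *)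

theory Defs
  imports "HOL-Analysis.Analysis" "HOL-Library.Liminf_Limsup"
begin

definition supp_fun :: "(real^'n) set \<Rightarrow> real^'n \<Rightarrow> real" where
  "supp_fun S \<xi> = (SUP s\<in>S. s \<bullet> \<xi>)"

definition sigma_S :: "(real^'n) set \<Rightarrow> real" where
  "sigma_S S = supp_fun S (\<chi> i. 1)"

definition cstar :: "(complex^'n) set" where
  "cstar = {z. \<forall>i. z $ i \<noteq> 0}"

definition log_abs :: "complex^'n \<Rightarrow> real^'n" where
  "log_abs z = (\<chi> i. ln (cmod (z $ i)))"

definition H_S :: "(real^'n) set \<Rightarrow> complex^'n \<Rightarrow> real" where
  "H_S S z = (if z \<in> cstar then supp_fun S (log_abs z)
     else real_of_ereal (Limsup (at z within cstar) (\<lambda>w. ereal (supp_fun S (log_abs w)))))"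

definition logplus :: "real \<Rightarrow> real" where
  "logplus x = max 0 (ln x)"

end

theory Submission
  imports Defs
begin

text \<open>For \<open>z\<close> and \<open>z + w\<close> on the torus, \<open>|z\<^sub>i + w\<^sub>i| \<le> |z\<^sub>i| (1 + |w\<^sub>i|/|z\<^sub>i|)\<close>, so \<open>log |z + w|\<close> is
  bounded coordinatewise by \<open>log |z| + \<xi>\<close> with \<open>\<xi>\<^sub>i = log (1 + |w\<^sub>i|/|z\<^sub>i|)\<close>. Since \<open>S \<subseteq> \<real>\<^sup>n\<^sub>+\<close>,
  the supporting function is monotone, and it is subadditive, which gives
  \<open>H\<^sub>S(z + w) \<le> H\<^sub>S(z) + \<phi>\<^sub>S(\<xi>)\<close>. The right-hand side is continuous in \<open>w\<close>, so the bound
  survives the limsup defining \<open>H\<^sub>S\<close> off the torus. The three estimates then follow from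
  \<open>log (1 + r) \<le> r\<close> (with \<open>z = \<one>\<close> for the second) and \<open>log (1 + r) \<le> log\<^sup>+ r + log 2\<close>.\<close>

lemma supp_fun_upper: "bounded S \<Longrightarrow> s \<in> S \<Longrightarrow> s \<bullet> \<xi> \<le> supp_fun S \<xi>"
  unfolding supp_fun_def by (rule cSUP_upper) (auto intro: bounded_inner_imp_bdd_above)

lemma supp_fun_least: "S \<noteq> {} \<Longrightarrow> (\<And>s. s \<in> S \<Longrightarrow> s \<bullet> \<xi> \<le> c) \<Longrightarrow> supp_fun S \<xi> \<le> c"
  unfolding supp_fun_def by (rule cSUP_least)

lemma supp_fun_nonneg: "bounded S \<Longrightarrow> 0 \<in> S \<Longrightarrow> 0 \<le> supp_fun S \<xi>"
  using supp_fun_upper[of S 0 \<xi>] by simp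

lemma supp_fun_zero: "S \<noteq> {} \<Longrightarrow> supp_fun S 0 = 0"
  by (simp add: supp_fun_def)

lemma supp_fun_mono:
  assumes "bounded S" "S \<noteq> {}" "\<forall>s\<in>S. \<forall>i. 0 \<le> s $ i" "\<And>i. a $ i \<le> b $ i"
  shows "supp_fun S a \<le> supp_fun S b"
proof (rule supp_fun_least[OF \<open>S \<noteq> {}\<close>])
  fix s assume s: "s \<in> S"
  have "s \<bullet> a \<le> s \<bullet> b"
    unfolding inner_vec_def using assms(3,4) s by (intro sum_mono) (simp add: mult_left_mono)
  also have "\<dots> \<le> supp_fun S b" using supp_fun_upper[OF \<open>bounded S\<close> s] .
  finally show "s \<bullet> a \<le> supp_fun S b" .
qed

lemma supp_fun_add_le:
  assumes "bounded S" "S \<noteq> {}"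
  shows "supp_fun S (a + b) \<le> supp_fun S a + supp_fun S b"
proof (rule supp_fun_least[OF \<open>S \<noteq> {}\<close>])
  fix s assume "s \<in> S"
  then show "s \<bullet> (a + b) \<le> supp_fun S a + supp_fun S b"
    using supp_fun_upper[OF \<open>bounded S\<close>] by (simp add: inner_add_right add_mono)
qed

lemma supp_fun_scaleR_le:
  assumes "bounded S" "S \<noteq> {}" "0 \<le> c"
  shows "supp_fun S (c *\<^sub>R a) \<le> c * supp_fun S a"
proof (rule supp_fun_least[OF \<open>S \<noteq> {}\<close>])
  fix s assume "s \<in> S"
  then show "s \<bullet> (c *\<^sub>R a) \<le> c * supp_fun S a"
    using supp_fun_upper[OF \<open>bounded S\<close>] \<open>0 \<le> c\<close> by (simp add: mult_left_mono)
qed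

lemma continuous_on_supp_fun:
  assumes "bounded S" "S \<noteq> {}"
  shows "continuous_on UNIV (supp_fun S)"
proof -
  obtain B where "B > 0" and B: "\<And>s. s \<in> S \<Longrightarrow> norm s \<le> B"
    using \<open>bounded S\<close> by (auto simp: bounded_pos)
  have le: "supp_fun S a \<le> supp_fun S b + B * dist a b" for a b
  proof (rule supp_fun_least[OF \<open>S \<noteq> {}\<close>])
    fix s assume s: "s \<in> S"
    have "s \<bullet> (a - b) \<le> norm s * norm (a - b)" by (rule norm_cauchy_schwarz)
    also have "\<dots> \<le> B * dist a b" using B[OF s] by (simp add: dist_norm mult_right_mono)
    finally show "s \<bullet> a \<le> supp_fun S b + B * dist a b"
      using supp_fun_upper[OF \<open>bounded S\<close> s, of b] by (simp add: inner_diff_right)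
  qed
  have "dist (supp_fun S a) (supp_fun S b) \<le> B * dist a b" for a b
    using le[of a b] le[of b a] by (simp add: dist_real_def dist_commute abs_le_iff)
  then have "B-lipschitz_on UNIV (supp_fun S)"
    using \<open>B > 0\<close> by (intro lipschitz_onI) auto
  then show ?thesis by (rule lipschitz_on_continuous_on)
qed

text \<open>The hypothesis \<open>0 \<le> g u\<close> guards against the junk value \<open>real_of_ereal (-\<infinity>) = 0\<close>.\<close>
lemma H_S_le_continuous_majorant:
  assumes g: "continuous (at u within cstar) g"
    and majorant: "\<And>v. v \<in> cstar \<Longrightarrow> supp_fun S (log_abs v) \<le> g v"
    and "0 \<le> g u"
  shows "H_S S u \<le> g u"
proof (cases "u \<in> cstar")
  case True
  then show ?thesis using majorant by (simp add: H_S_def)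
next
  case False
  let ?F = "at u within cstar"
  have "Limsup ?F (\<lambda>v. ereal (supp_fun S (log_abs v))) \<le> ereal (g u)"
  proof (cases "?F = bot")
    case False
    have "Limsup ?F (\<lambda>v. ereal (supp_fun S (log_abs v))) \<le> Limsup ?F (\<lambda>v. ereal (g v))"
      using majorant by (intro Limsup_mono) (simp add: eventually_at_filter)
    also have "\<dots> = ereal (g u)"
      using g False by (intro lim_imp_Limsup) (simp_all add: continuous_within tendsto_ereal)
    finally show ?thesis .
  qed simp
  then have "real_of_ereal (Limsup ?F (\<lambda>v. ereal (supp_fun S (log_abs v)))) \<le> g u"
    using \<open>0 \<le> g u\<close> by (cases "Limsup ?F (\<lambda>v. ereal (supp_fun S (log_abs v)))") auto
  with False show ?thesis by (simp add: H_S_def)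
qed

lemma ln_norm_add_le:
  fixes a b :: "'a :: real_normed_vector"
  assumes "a \<noteq> 0" "a + b \<noteq> 0"
  shows "ln (norm (a + b)) \<le> ln (norm a) + ln (1 + norm b / norm a)"
proof -
  have "norm a > 0" using assms(1) by simp
  then have "1 + norm b / norm a > 0" by (simp add: add_pos_nonneg)
  have "ln (norm (a + b)) \<le> ln (norm a + norm b)"
    using assms(2) norm_triangle_ineq[of a b] by (intro ln_mono) auto
  also have "norm a + norm b = norm a * (1 + norm b / norm a)"
    using \<open>norm a > 0\<close> by (simp add: distrib_left)
  also have "ln \<dots> = ln (norm a) + ln (1 + norm b / norm a)"
    using \<open>norm a > 0\<close> \<open>1 + norm b / norm a > 0\<close> by (rule ln_mult_pos)
  finally show ?thesis .
qed

lemma ln_one_plus_le_logplus: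
  assumes "0 \<le> r"
  shows "ln (1 + r) \<le> logplus r + ln 2"
proof (cases "r \<le> 1")
  case False
  then have "ln (1 + r) \<le> ln (2 * r)" by simp
  also have "\<dots> = ln r + ln 2" using False by (simp add: ln_mult)
  finally show ?thesis by (simp add: logplus_def)
next
  case True
  with assms have "ln (1 + r) \<le> ln 2" by simp
  then show ?thesis by (simp add: logplus_def)
qed

context
  fixes S :: "(real^'n) set"
  assumes bounded: "bounded S" and zero_in: "0 \<in> S" and nonneg: "\<forall>s\<in>S. \<forall>i. 0 \<le> s $ i"
begin

lemma supp_fun_log_abs_add_le:
  assumes "z \<in> cstar" "z + w \<in> cstar"
  shows "supp_fun S (log_abs (z + w))
    \<le> supp_fun S (log_abs z) + supp_fun S (\<chi> i. ln (1 + cmod (w $ i) / cmod (z $ i)))"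
proof -
  have "ln (cmod (z $ i + w $ i)) \<le> ln (cmod (z $ i)) + ln (1 + cmod (w $ i) / cmod (z $ i))" for i
    using assms by (intro ln_norm_add_le) (auto simp: cstar_def)
  then have "supp_fun S (log_abs (z + w))
      \<le> supp_fun S (log_abs z + (\<chi> i. ln (1 + cmod (w $ i) / cmod (z $ i))))"
    using zero_in by (intro supp_fun_mono[OF bounded _ nonneg]) (auto simp: log_abs_def)
  also have "\<dots> \<le> supp_fun S (log_abs z) + supp_fun S (\<chi> i. ln (1 + cmod (w $ i) / cmod (z $ i)))"
    using bounded zero_in by (intro supp_fun_add_le) auto
  finally show ?thesis .
qed

lemma H_S_add_le:
  assumes z: "z \<in> cstar"
  shows "H_S S (z + w) \<le> H_S S z + supp_fun S (\<chi> i. ln (1 + cmod (w $ i) / cmod (z $ i)))"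
proof -
  define g where "g u = H_S S z + supp_fun S (\<chi> i. ln (1 + cmod ((u - z) $ i) / cmod (z $ i)))" for u
  have nz: "z $ i \<noteq> 0" for i
    using z by (simp add: cstar_def)
  then have pos: "1 + cmod x / cmod (z $ i) > 0" for x i
    by (simp add: add_pos_nonneg)
  have "continuous_on UNIV g"
    unfolding g_def using bounded zero_in
    by (intro continuous_on_add continuous_on_const continuous_on_compose2[OF continuous_on_supp_fun]
        continuous_on_vec_lambda continuous_intros) (auto simp: nz pos[THEN less_imp_neq, symmetric])
  then have "isCont g (z + w)"
    by (simp add: continuous_on_eq_continuous_at)
  then have "continuous (at (z + w) within cstar) g"
    by (rule continuous_at_imp_continuous_within)
  moreover have "supp_fun S (log_abs v) \<le> g v" if "v \<in> cstar" for v
    using supp_fun_log_abs_add_le[OF z, of "v - z"] z that by (simp add: g_def H_S_def)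
  moreover have "0 \<le> g (z + w)"
    using z bounded zero_in by (simp add: g_def H_S_def supp_fun_nonneg)
  ultimately have "H_S S (z + w) \<le> g (z + w)" by (rule H_S_le_continuous_majorant)
  then show ?thesis by (simp add: g_def)
qed

lemma H_S_add_le_ratio:
  assumes "z \<in> cstar"
  shows "H_S S (z + w) \<le> H_S S z + supp_fun S (\<chi> i. cmod (w $ i) / cmod (z $ i))"
proof -
  have "supp_fun S (\<chi> i. ln (1 + cmod (w $ i) / cmod (z $ i)))
      \<le> supp_fun S (\<chi> i. cmod (w $ i) / cmod (z $ i))"
    using zero_in by (intro supp_fun_mono[OF bounded _ nonneg]) (auto intro: ln_add_one_self_le_self)
  then show ?thesis using H_S_add_le[OF assms, of w] by simp
qed

lemma H_S_one_add_le:
  assumes "\<forall>i. cmod (w $ i) \<le> 1" "0 < \<delta>"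
  shows "H_S S (\<chi> i. 1 + complex_of_real \<delta> * w $ i) \<le> \<delta> * sigma_S S"
proof -
  have one: "(\<chi> i. 1 :: complex^'n) \<in> cstar" by (simp add: cstar_def)
  have "log_abs (\<chi> i. 1 :: complex^'n) = 0"
    by (simp add: log_abs_def vec_eq_iff)
  then have "H_S S (\<chi> i. 1) = 0"
    using one zero_in supp_fun_zero[of S] by (auto simp: H_S_def)
  moreover have "supp_fun S (\<chi> i. cmod (complex_of_real \<delta> * w $ i)) \<le> supp_fun S (\<delta> *\<^sub>R (\<chi> i. 1))"
    using assms zero_in by (intro supp_fun_mono[OF bounded _ nonneg]) (auto simp: norm_mult mult_left_le)
  moreover have "supp_fun S (\<delta> *\<^sub>R (\<chi> i. 1)) \<le> \<delta> * sigma_S S"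
    unfolding sigma_S_def using assms bounded zero_in by (intro supp_fun_scaleR_le) auto
  moreover have "(\<chi> i. 1 + complex_of_real \<delta> * w $ i) = (\<chi> i. 1) + (\<chi> i. complex_of_real \<delta> * w $ i)"
    by (simp add: vec_eq_iff)
  ultimately show ?thesis
    using H_S_add_le_ratio[OF one, of "\<chi> i. complex_of_real \<delta> * w $ i"] by simp
qed

lemma H_S_add_le_logplus:
  assumes "z \<in> cstar"
  shows "H_S S (z + w) \<le> H_S S z
    + supp_fun S (\<chi> i. logplus (cmod (w $ i) / cmod (z $ i))) + ln 2 * sigma_S S"
proof -
  have "supp_fun S (\<chi> i. ln (1 + cmod (w $ i) / cmod (z $ i)))
      \<le> supp_fun S ((\<chi> i. logplus (cmod (w $ i) / cmod (z $ i))) + ln 2 *\<^sub>R (\<chi> i. 1))"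
    using zero_in by (intro supp_fun_mono[OF bounded _ nonneg]) (auto simp: ln_one_plus_le_logplus)
  also have "\<dots> \<le> supp_fun S (\<chi> i. logplus (cmod (w $ i) / cmod (z $ i)))
      + supp_fun S (ln 2 *\<^sub>R (\<chi> i. 1))"
    using bounded zero_in by (intro supp_fun_add_le) auto
  also have "supp_fun S (ln 2 *\<^sub>R (\<chi> i. 1)) \<le> ln 2 * sigma_S S"
    unfolding sigma_S_def using bounded zero_in by (intro supp_fun_scaleR_le) auto
  finally show ?thesis using H_S_add_le[OF assms, of w] by simp
qed

end

theorem proposition3p2:
  fixes S :: "(real^'n) set"
  assumes "compact S" and "convex S" and "0 \<in> S"
    and "\<forall>s\<in>S. \<forall>i. s $ i \<ge> 0"
  shows "(\<forall>z \<in> cstar. \<forall>w :: complex^'n.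
            H_S S (z + w) \<le> H_S S z + supp_fun S (\<chi> i. cmod (w $ i) / cmod (z $ i)))
       \<and> (\<forall>w :: complex^'n. \<forall>\<delta> :: real. (\<forall>i. cmod (w $ i) \<le> 1) \<and> 0 < \<delta> \<and> \<delta> < 1 \<longrightarrow>
            H_S S (\<chi> i. 1 + complex_of_real \<delta> * w $ i) \<le> \<delta> * sigma_S S)
       \<and> (\<forall>z \<in> cstar. \<forall>w :: complex^'n.
            H_S S (z + w) \<le> H_S S z
              + supp_fun S (\<chi> i. logplus (cmod (w $ i) / cmod (z $ i))) + ln 2 * sigma_S S)"
proof -
  note hyps = compact_imp_bounded[OF \<open>compact S\<close>] \<open>0 \<in> S\<close> \<open>\<forall>s\<in>S. \<forall>i. s $ i \<ge> 0\<close>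
  show ?thesis
    using H_S_add_le_ratio[OF hyps] H_S_one_add_le[OF hyps] H_S_add_le_logplus[OF hyps] by simp
qed

end
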